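(* Let $M:\mathbb M\to\mathbb{P}\mathrm{b}$ be a cartesian multicategory. Let $\alpha:X\to Z$ be a loose arrow and $f:X\to Y$ a tight arrow of $\mathbb M$ such that $M_0f$ is a bijection, let $g=f^{-1}$ (the inverse tight arrow, lying over $(M_0f)^{-1}$), and let $h=M_l\alpha\circ(M_0f)^{-1}:M_0Y\to M_0Z$. Then the covariant reindexing $f^h_!\alpha$ coincides with the contravariant reindexing $g^*\alpha$, i.e. with the left loose side of the unique cell of $\mathbb M$ having right side $\alpha$, top $g$ and bottom $\mathrm{id}_Z$.
   Context: All double categories are strict; a double category $\mathbb A$ has tight category $\mathbb A_0$, a category $\mathbb A_1$ of loose arrows and cells, $s,t:\mathbb A_1\to\mathbb A_0$, and associative unital loose composition; a cell has left/right loose sides (domain/codomain in $\mathbb A_1$) and top/bottom tight sides. $\mathbb{P}\mathrm{b}$ is the double category of finite sets with maps as tight and loose arrows and pullback squares as cells (left side $f:I\to J$, right side $g:L\to K$, top $k:I\to L$, bottom $l:J\to K$, with $gk=lf$ a pullback). A symmetric multicategory is a double category $\mathbb M$ whose $\mathbb M_0,\mathbb M_1$ have finite sums preserved by $s,t$, with a double functor $M:\mathbb M\to\mathbb{P}\mathrm{b}$ whose components $M_0:\mathbb M_0\to\mathrm{Set}_f$, $M_1:\mathbb M_1\to\mathbb{P}\mathrm{b}_1$ preserve finite sums and are discrete fibrations ($M_l$ = action on loose arrows). Thus each pullback square in $\mathrm{Set}_f$ with right side $M_l\beta$ lifts uniquely to a cell with right side $\beta$. Cartesian multicategory (covariant reindexing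 form, given in the paper as equivalent to being an algebra for its monad $(-)^{\mathrm{cart}}$): a symmetric multicategory with an assignment, to each loose $\alpha:X\to Z$, tight $f:X\to Y$ and map $h:M_0Y\to M_0Z$ with $h\circ M_0f=M_l\alpha$, of a loose $f^h_!\alpha:Y\to Z$ with $M_l(f^h_!\alpha)=h$, satisfying: (U) $(\mathrm{id}_X)^{M_l\alpha}_!\alpha=\alpha$; (Functoriality) $f^h_!(g^{h'}_!\alpha)=(fg)^h_!\alpha$ for tight $g:X\to Y$, $f:Y\to W$, maps $h'\circ M_0g=M_l\alpha$, $h\circ M_0f=h'$; (Frobenius) for a cell with left side $\gamma:W\to V$, right side $\alpha:X\to Y$, top $k$, bottom $g:V\to Y$, loose $\beta:V\to Z$ and map $m$ with $m\circ M_0g=M_l\beta$: $k^{m\circ M_l\alpha}_!(\beta\gamma)=(g^m_!\beta)\alpha$; (Tailing) for loose $\alpha:U\to Y$, tight $f:U\to X$, $m\circ M_0f=M_l\alpha$, loose $\beta:Y\to Z$: $f^{M_l\beta\circ m}_!(\beta\alpha)=\beta\circ f^m_!\alpha$; (Beck–Chevalley) if $\delta=f^h_!\alpha$ ($\alpha:X\to Z$, $f:X\to Y$), $c_1$ is a cell with right side $\alpha$, bottom tight $g:Z'\to Z$, left side $\alpha':X'\to Z'$, top $x$, and $c_2$ is a cell with right side $\delta$, bottom $g$, left side $\delta':Y'\to Z'$, top $y$, and $f':X'\to Y'$ is tight with $yf'=fx$ and $M_l\delta'\circ M_0f'=M_l\alpha'$, then $\delta'=f'^{M_l\delta'}_!\alpha'$.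 *)

theory Defs
  imports "HOL-Library.FuncSet"
begin

section \<open>Categories given by total types with partial composition\<close>

definition category :: "('a \<Rightarrow> 'o) \<Rightarrow> ('a \<Rightarrow> 'o) \<Rightarrow> ('a \<Rightarrow> 'a \<Rightarrow> 'a) \<Rightarrow> ('o \<Rightarrow> 'a) \<Rightarrow> bool" where
  "category dm cd cmp idt \<longleftrightarrow>
     (\<forall>X. dm (idt X) = X \<and> cd (idt X) = X) \<and>
     (\<forall>f g. cd f = dm g \<longrightarrow> dm (cmp g f) = dm f \<and> cd (cmp g f) = cd g) \<and>
     (\<forall>f g h. cd f = dm g \<and> cd g = dm h \<longrightarrow> cmp h (cmp g f) = cmp (cmp h g) f) \<and>
     (\<forall>f. cmp (idt (cd f)) f = f \<and> cmp f (idt (dm f)) = f)"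

definition is_functor ::
  "('a \<Rightarrow> 'o) \<Rightarrow> ('a \<Rightarrow> 'o) \<Rightarrow> ('a \<Rightarrow> 'a \<Rightarrow> 'a) \<Rightarrow> ('o \<Rightarrow> 'a) \<Rightarrow>
   ('b \<Rightarrow> 'p) \<Rightarrow> ('b \<Rightarrow> 'p) \<Rightarrow> ('b \<Rightarrow> 'b \<Rightarrow> 'b) \<Rightarrow> ('p \<Rightarrow> 'b) \<Rightarrow>
   ('o \<Rightarrow> 'p) \<Rightarrow> ('a \<Rightarrow> 'b) \<Rightarrow> bool" where
  "is_functor dm cd cmp idt dm' cd' cmp' idt' Fo Fa \<longleftrightarrow>
     (\<forall>f. dm' (Fa f) = Fo (dm f) \<and> cd' (Fa f) = Fo (cd f)) \<and>
     (\<forall>f g. cd f = dm g \<longrightarrow> Fa (cmp g f) = cmp' (Fa g) (Fa f)) \<and>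
     (\<forall>X. Fa (idt X) = idt' (Fo X))"

definition is_initial :: "('a \<Rightarrow> 'o) \<Rightarrow> ('a \<Rightarrow> 'o) \<Rightarrow> 'o \<Rightarrow> bool" where
  "is_initial dm cd I0 \<longleftrightarrow> (\<forall>Z. \<exists>!w. dm w = I0 \<and> cd w = Z)"

definition is_coproduct ::
  "('a \<Rightarrow> 'o) \<Rightarrow> ('a \<Rightarrow> 'o) \<Rightarrow> ('a \<Rightarrow> 'a \<Rightarrow> 'a) \<Rightarrow> 'o \<Rightarrow> 'o \<Rightarrow> 'o \<Rightarrow> 'a \<Rightarrow> 'a \<Rightarrow> bool" where
  "is_coproduct dm cd cmp A B S i1 i2 \<longleftrightarrow>
     dm i1 = A \<and> cd i1 = S \<and> dm i2 = B \<and> cd i2 = S \<and>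
     (\<forall>Z u v. dm u = A \<and> cd u = Z \<and> dm v = B \<and> cd v = Z \<longrightarrow>
        (\<exists>!w. dm w = S \<and> cd w = Z \<and> cmp w i1 = u \<and> cmp w i2 = v))"

definition has_finite_sums :: "('a \<Rightarrow> 'o) \<Rightarrow> ('a \<Rightarrow> 'o) \<Rightarrow> ('a \<Rightarrow> 'a \<Rightarrow> 'a) \<Rightarrow> bool" where
  "has_finite_sums dm cd cmp \<longleftrightarrow>
     (\<exists>I0. is_initial dm cd I0) \<and> (\<forall>A B. \<exists>S i1 i2. is_coproduct dm cd cmp A B S i1 i2)"

definition preserves_sums ::
  "('a \<Rightarrow> 'o) \<Rightarrow> ('a \<Rightarrow> 'o) \<Rightarrow> ('a \<Rightarrow> 'a \<Rightarrow> 'a) \<Rightarrow>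
   ('b \<Rightarrow> 'p) \<Rightarrow> ('b \<Rightarrow> 'p) \<Rightarrow> ('b \<Rightarrow> 'b \<Rightarrow> 'b) \<Rightarrow> ('o \<Rightarrow> 'p) \<Rightarrow> ('a \<Rightarrow> 'b) \<Rightarrow> bool" where
  "preserves_sums dm cd cmp dm' cd' cmp' Fo Fa \<longleftrightarrow>
     (\<forall>I0. is_initial dm cd I0 \<longrightarrow> is_initial dm' cd' (Fo I0)) \<and>
     (\<forall>A B S i1 i2. is_coproduct dm cd cmp A B S i1 i2 \<longrightarrow>
        is_coproduct dm' cd' cmp' (Fo A) (Fo B) (Fo S) (Fa i1) (Fa i2))"

text \<open>Coproduct cocones in the category of finite sets (maps are extensional functions).\<close>
definition set_coproduct :: "'e set \<Rightarrow> 'e set \<Rightarrow> 'e set \<Rightarrow> ('e \<Rightarrow> 'e) \<Rightarrow> ('e \<Rightarrow> 'e) \<Rightarrow> bool" where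
  "set_coproduct A B S u v \<longleftrightarrow>
     inj_on u A \<and> inj_on v B \<and> u ` A \<inter> v ` B = {} \<and> u ` A \<union> v ` B = S"

text \<open>A commutative square in finite sets which is a pullback:
  left f : I \<rightarrow> J, right g : L \<rightarrow> K, top k : I \<rightarrow> L, bottom l : J \<rightarrow> K.\<close>
definition is_pullback ::
  "'e set \<Rightarrow> 'e set \<Rightarrow> 'e set \<Rightarrow> 'e set \<Rightarrow> ('e \<Rightarrow> 'e) \<Rightarrow> ('e \<Rightarrow> 'e) \<Rightarrow> ('e \<Rightarrow> 'e) \<Rightarrow> ('e \<Rightarrow> 'e) \<Rightarrow> bool" where
  "is_pullback I J L K f g k l \<longleftrightarrow>
     (\<forall>i\<in>I. g (k i) = l (f i)) \<and>
     bij_betw (\<lambda>i. (f i, k i)) I {(j, x). j \<in> J \<and> x \<in> L \<and> l j = g x}"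

record ('o, 't, 'l, 'c) dbl =
  tdom :: "'t \<Rightarrow> 'o"
  tcod :: "'t \<Rightarrow> 'o"
  tcomp :: "'t \<Rightarrow> 't \<Rightarrow> 't"   \<comment> \<open>tcomp g f = g \<circ> f\<close>
  tid :: "'o \<Rightarrow> 't"
  lsrc :: "'l \<Rightarrow> 'o"
  ltgt :: "'l \<Rightarrow> 'o"
  lcomp :: "'l \<Rightarrow> 'l \<Rightarrow> 'l"   \<comment> \<open>lcomp \<beta> \<alpha> = \<beta>\<alpha>, loose composition\<close>
  lid :: "'o \<Rightarrow> 'l"
  cleft :: "'c \<Rightarrow> 'l"        \<comment> \<open>domain in A_1\<close>
  cright :: "'c \<Rightarrow> 'l"       \<comment> \<open>codomain in A_1\<close>
  ctop :: "'c \<Rightarrow> 't"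
  cbot :: "'c \<Rightarrow> 't"
  ccomp :: "'c \<Rightarrow> 'c \<Rightarrow> 'c"
  cid :: "'l \<Rightarrow> 'c"
  chcomp :: "'c \<Rightarrow> 'c \<Rightarrow> 'c"
  chid :: "'t \<Rightarrow> 'c"

definition double_category :: "('o, 't, 'l, 'c, 'z) dbl_scheme \<Rightarrow> bool" where
  "double_category A \<longleftrightarrow>
     category (tdom A) (tcod A) (tcomp A) (tid A) \<and>
     category (cleft A) (cright A) (ccomp A) (cid A) \<and>
     is_functor (cleft A) (cright A) (ccomp A) (cid A) (tdom A) (tcod A) (tcomp A) (tid A) (lsrc A) (ctop A) \<and>
     is_functor (cleft A) (cright A) (ccomp A) (cid A) (tdom A) (tcod A) (tcomp A) (tid A) (ltgt A) (cbot A) \<and>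
     (\<forall>\<alpha> \<beta>. ltgt A \<alpha> = lsrc A \<beta> \<longrightarrow>
        lsrc A (lcomp A \<beta> \<alpha>) = lsrc A \<alpha> \<and> ltgt A (lcomp A \<beta> \<alpha>) = ltgt A \<beta>) \<and>
     (\<forall>X. lsrc A (lid A X) = X \<and> ltgt A (lid A X) = X) \<and>
     (\<forall>c d. ctop A d = cbot A c \<longrightarrow>
        cleft A (chcomp A d c) = lcomp A (cleft A d) (cleft A c) \<and>
        cright A (chcomp A d c) = lcomp A (cright A d) (cright A c) \<and>
        ctop A (chcomp A d c) = ctop A c \<and> cbot A (chcomp A d c) = cbot A d) \<and>
     (\<forall>f. cleft A (chid A f) = lid A (tdom A f) \<and> cright A (chid A f) = lid A (tcod A f) \<and>
        ctop A (chid A f) = f \<and> cbot A (chid A f) = f) \<and>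
     (\<forall>c c' d d'. cright A c = cleft A c' \<and> cright A d = cleft A d' \<and>
        ctop A d = cbot A c \<and> ctop A d' = cbot A c' \<longrightarrow>
        chcomp A (ccomp A d' d) (ccomp A c' c) = ccomp A (chcomp A d' c') (chcomp A d c)) \<and>
     (\<forall>\<alpha> \<beta>. ltgt A \<alpha> = lsrc A \<beta> \<longrightarrow> chcomp A (cid A \<beta>) (cid A \<alpha>) = cid A (lcomp A \<beta> \<alpha>)) \<and>
     (\<forall>f g. tcod A f = tdom A g \<longrightarrow> chid A (tcomp A g f) = ccomp A (chid A g) (chid A f)) \<and>
     (\<forall>X. chid A (tid A X) = cid A (lid A X)) \<and>
     (\<forall>\<alpha> \<beta> \<gamma>. ltgt A \<alpha> = lsrc A \<beta> \<and> ltgt A \<beta> = lsrc A \<gamma> \<longrightarrow>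
        lcomp A \<gamma> (lcomp A \<beta> \<alpha>) = lcomp A (lcomp A \<gamma> \<beta>) \<alpha>) \<and>
     (\<forall>c d e. ctop A d = cbot A c \<and> ctop A e = cbot A d \<longrightarrow>
        chcomp A e (chcomp A d c) = chcomp A (chcomp A e d) c) \<and>
     (\<forall>\<alpha>. lcomp A (lid A (ltgt A \<alpha>)) \<alpha> = \<alpha> \<and> lcomp A \<alpha> (lid A (lsrc A \<alpha>)) = \<alpha>) \<and>
     (\<forall>c. chcomp A (chid A (cbot A c)) c = c \<and> chcomp A c (chid A (ctop A c)) = c)"

section \<open>Symmetric multicategories: double functors into Pb\<close>

text \<open>The double is_functor M : A \<rightarrow> Pb is given by Mob (objects to finite subsets of 'e),
  Mt (tight arrows to maps, as extensional functions) and Ml (loose arrows to maps).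
  Since cells of Pb are determined by their boundary, the action on cells is
  determined; the requirement is that the image of every cell is a pullback square.\<close>

definition double_functor_to_Pb ::
  "('o, 't, 'l, 'c, 'z) dbl_scheme \<Rightarrow> ('o \<Rightarrow> 'e set) \<Rightarrow> ('t \<Rightarrow> 'e \<Rightarrow> 'e) \<Rightarrow> ('l \<Rightarrow> 'e \<Rightarrow> 'e) \<Rightarrow> bool" where
  "double_functor_to_Pb A Mob Mt Ml \<longleftrightarrow>
     (\<forall>X. finite (Mob X)) \<and>
     (\<forall>f. Mt f \<in> Mob (tdom A f) \<rightarrow>\<^sub>E Mob (tcod A f)) \<and>
     (\<forall>f g. tcod A f = tdom A g \<longrightarrow> Mt (tcomp A g f) = compose (Mob (tdom A f)) (Mt g) (Mt f)) \<and>
     (\<forall>X. Mt (tid A X) = restrict id (Mob X)) \<and>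
     (\<forall>\<alpha>. Ml \<alpha> \<in> Mob (lsrc A \<alpha>) \<rightarrow>\<^sub>E Mob (ltgt A \<alpha>)) \<and>
     (\<forall>\<alpha> \<beta>. ltgt A \<alpha> = lsrc A \<beta> \<longrightarrow> Ml (lcomp A \<beta> \<alpha>) = compose (Mob (lsrc A \<alpha>)) (Ml \<beta>) (Ml \<alpha>)) \<and>
     (\<forall>X. Ml (lid A X) = restrict id (Mob X)) \<and>
     (\<forall>c. is_pullback (Mob (lsrc A (cleft A c))) (Mob (ltgt A (cleft A c)))
                      (Mob (lsrc A (cright A c))) (Mob (ltgt A (cright A c)))
                      (Ml (cleft A c)) (Ml (cright A c)) (Mt (ctop A c)) (Mt (cbot A c)))"

definition M0_discrete_fibration ::
  "('o, 't, 'l, 'c, 'z) dbl_scheme \<Rightarrow> ('o \<Rightarrow> 'e set) \<Rightarrow> ('t \<Rightarrow> 'e \<Rightarrow> 'e) \<Rightarrow> bool" where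
  "M0_discrete_fibration A Mob Mt \<longleftrightarrow>
     (\<forall>Y I u. finite I \<and> u \<in> I \<rightarrow>\<^sub>E Mob Y \<longrightarrow>
        (\<exists>!f. tcod A f = Y \<and> Mob (tdom A f) = I \<and> Mt f = u))"

definition M1_discrete_fibration ::
  "('o, 't, 'l, 'c, 'z) dbl_scheme \<Rightarrow> ('o \<Rightarrow> 'e set) \<Rightarrow> ('t \<Rightarrow> 'e \<Rightarrow> 'e) \<Rightarrow> ('l \<Rightarrow> 'e \<Rightarrow> 'e) \<Rightarrow> bool" where
  "M1_discrete_fibration A Mob Mt Ml \<longleftrightarrow>
     (\<forall>\<beta> I J f k l. finite I \<and> finite J \<and> f \<in> I \<rightarrow>\<^sub>E J \<and>
        k \<in> I \<rightarrow>\<^sub>E Mob (lsrc A \<beta>) \<and> l \<in> J \<rightarrow>\<^sub>E Mob (ltgt A \<beta>) \<and>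
        is_pullback I J (Mob (lsrc A \<beta>)) (Mob (ltgt A \<beta>)) f (Ml \<beta>) k l \<longrightarrow>
        (\<exists>!c. cright A c = \<beta> \<and> Mob (lsrc A (cleft A c)) = I \<and> Mob (ltgt A (cleft A c)) = J \<and>
              Ml (cleft A c) = f \<and> Mt (ctop A c) = k \<and> Mt (cbot A c) = l))"

text \<open>Preservation of finite sums by M_0 (into finite sets) and M_1 (into Pb_1, where
  sums are computed componentwise on top and bottom).\<close>
definition M_preserves_sums ::
  "('o, 't, 'l, 'c, 'z) dbl_scheme \<Rightarrow> ('o \<Rightarrow> 'e set) \<Rightarrow> ('t \<Rightarrow> 'e \<Rightarrow> 'e) \<Rightarrow> bool" where
  "M_preserves_sums A Mob Mt \<longleftrightarrow>
     (\<forall>I0. is_initial (tdom A) (tcod A) I0 \<longrightarrow> Mob I0 = {}) \<and>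
     (\<forall>X Y S i1 i2. is_coproduct (tdom A) (tcod A) (tcomp A) X Y S i1 i2 \<longrightarrow>
        set_coproduct (Mob X) (Mob Y) (Mob S) (Mt i1) (Mt i2)) \<and>
     (\<forall>I0. is_initial (cleft A) (cright A) I0 \<longrightarrow> Mob (lsrc A I0) = {} \<and> Mob (ltgt A I0) = {}) \<and>
     (\<forall>\<alpha> \<beta> \<sigma> c1 c2. is_coproduct (cleft A) (cright A) (ccomp A) \<alpha> \<beta> \<sigma> c1 c2 \<longrightarrow>
        set_coproduct (Mob (lsrc A \<alpha>)) (Mob (lsrc A \<beta>)) (Mob (lsrc A \<sigma>)) (Mt (ctop A c1)) (Mt (ctop A c2)) \<and>
        set_coproduct (Mob (ltgt A \<alpha>)) (Mob (ltgt A \<beta>)) (Mob (ltgt A \<sigma>)) (Mt (cbot A c1)) (Mt (cbot A c2)))"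

definition symmetric_multicategory ::
  "('o, 't, 'l, 'c, 'z) dbl_scheme \<Rightarrow> ('o \<Rightarrow> 'e set) \<Rightarrow> ('t \<Rightarrow> 'e \<Rightarrow> 'e) \<Rightarrow> ('l \<Rightarrow> 'e \<Rightarrow> 'e) \<Rightarrow> bool" where
  "symmetric_multicategory A Mob Mt Ml \<longleftrightarrow>
     double_category A \<and>
     has_finite_sums (tdom A) (tcod A) (tcomp A) \<and>
     has_finite_sums (cleft A) (cright A) (ccomp A) \<and>
     preserves_sums (cleft A) (cright A) (ccomp A) (tdom A) (tcod A) (tcomp A) (lsrc A) (ctop A) \<and>
     preserves_sums (cleft A) (cright A) (ccomp A) (tdom A) (tcod A) (tcomp A) (ltgt A) (cbot A) \<and>
     double_functor_to_Pb A Mob Mt Ml \<and>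
     M_preserves_sums A Mob Mt \<and>
     M0_discrete_fibration A Mob Mt \<and>
     M1_discrete_fibration A Mob Mt Ml"

text \<open>push f h \<alpha> is the covariant reindexing f^h_! \<alpha>; it is only constrained when
  reindex_ok holds, i.e. \<alpha> : X \<rightarrow> Z, f : X \<rightarrow> Y, h : M_0 Y \<rightarrow> M_0 Z with h \<circ> M_0 f = M_l \<alpha>.\<close>
definition reindex_ok ::
  "('o, 't, 'l, 'c, 'z) dbl_scheme \<Rightarrow> ('o \<Rightarrow> 'e set) \<Rightarrow> ('t \<Rightarrow> 'e \<Rightarrow> 'e) \<Rightarrow> ('l \<Rightarrow> 'e \<Rightarrow> 'e) \<Rightarrow>
   't \<Rightarrow> ('e \<Rightarrow> 'e) \<Rightarrow> 'l \<Rightarrow> bool" where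
  "reindex_ok A Mob Mt Ml f h \<alpha> \<longleftrightarrow>
     lsrc A \<alpha> = tdom A f \<and> h \<in> Mob (tcod A f) \<rightarrow>\<^sub>E Mob (ltgt A \<alpha>) \<and>
     compose (Mob (tdom A f)) h (Mt f) = Ml \<alpha>"

definition cartesian_multicategory ::
  "('o, 't, 'l, 'c, 'z) dbl_scheme \<Rightarrow> ('o \<Rightarrow> 'e set) \<Rightarrow> ('t \<Rightarrow> 'e \<Rightarrow> 'e) \<Rightarrow> ('l \<Rightarrow> 'e \<Rightarrow> 'e) \<Rightarrow>
   ('t \<Rightarrow> ('e \<Rightarrow> 'e) \<Rightarrow> 'l \<Rightarrow> 'l) \<Rightarrow> bool" where
  "cartesian_multicategory A Mob Mt Ml push \<longleftrightarrow>
     symmetric_multicategory A Mob Mt Ml \<and>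
     \<comment> \<open>typing of f^h_! \<alpha>\<close>
     (\<forall>f h \<alpha>. reindex_ok A Mob Mt Ml f h \<alpha> \<longrightarrow>
        lsrc A (push f h \<alpha>) = tcod A f \<and> ltgt A (push f h \<alpha>) = ltgt A \<alpha> \<and> Ml (push f h \<alpha>) = h) \<and>
     \<comment> \<open>(U)\<close>
     (\<forall>\<alpha>. push (tid A (lsrc A \<alpha>)) (Ml \<alpha>) \<alpha> = \<alpha>) \<and>
     \<comment> \<open>(Functoriality)\<close>
     (\<forall>\<alpha> g f h' h. lsrc A \<alpha> = tdom A g \<and> tcod A g = tdom A f \<and>
        h' \<in> Mob (tcod A g) \<rightarrow>\<^sub>E Mob (ltgt A \<alpha>) \<and> compose (Mob (tdom A g)) h' (Mt g) = Ml \<alpha> \<and>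
        h \<in> Mob (tcod A f) \<rightarrow>\<^sub>E Mob (ltgt A \<alpha>) \<and> compose (Mob (tdom A f)) h (Mt f) = h' \<longrightarrow>
        push f h (push g h' \<alpha>) = push (tcomp A f g) h \<alpha>) \<and>
     \<comment> \<open>(Frobenius): cell c with left \<gamma>, right \<alpha>, top k, bottom g\<close>
     (\<forall>c \<beta> m. ltgt A (cleft A c) = lsrc A \<beta> \<and>
        m \<in> Mob (ltgt A (cright A c)) \<rightarrow>\<^sub>E Mob (ltgt A \<beta>) \<and>
        compose (Mob (ltgt A (cleft A c))) m (Mt (cbot A c)) = Ml \<beta> \<longrightarrow>
        push (ctop A c) (compose (Mob (lsrc A (cright A c))) m (Ml (cright A c))) (lcomp A \<beta> (cleft A c))
          = lcomp A (push (cbot A c) m \<beta>) (cright A c)) \<and>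
     \<comment> \<open>(Tailing)\<close>
     (\<forall>\<alpha> f m \<beta>. lsrc A \<alpha> = tdom A f \<and> m \<in> Mob (tcod A f) \<rightarrow>\<^sub>E Mob (ltgt A \<alpha>) \<and>
        compose (Mob (tdom A f)) m (Mt f) = Ml \<alpha> \<and> lsrc A \<beta> = ltgt A \<alpha> \<longrightarrow>
        push f (compose (Mob (tcod A f)) (Ml \<beta>) m) (lcomp A \<beta> \<alpha>) = lcomp A \<beta> (push f m \<alpha>)) \<and>
     \<comment> \<open>(Beck--Chevalley)\<close>
     (\<forall>\<alpha> f h c1 c2 f'. reindex_ok A Mob Mt Ml f h \<alpha> \<and>
        cright A c1 = \<alpha> \<and> cright A c2 = push f h \<alpha> \<and> cbot A c1 = cbot A c2 \<and>
        tdom A f' = lsrc A (cleft A c1) \<and> tcod A f' = lsrc A (cleft A c2) \<and>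
        tcomp A (ctop A c2) f' = tcomp A f (ctop A c1) \<and>
        compose (Mob (tdom A f')) (Ml (cleft A c2)) (Mt f') = Ml (cleft A c1) \<longrightarrow>
        cleft A c2 = push f' (Ml (cleft A c2)) (cleft A c1))"

end

theory Submission
  imports Defs
begin

text \<open>Since \<open>M\<^sub>1\<close> is a discrete fibration and a square
  in finite sets with bijective top \<open>M\<^sub>0 g\<close> and identity bottom is a pullback, the cell
  \<open>g\<^sup>*\<alpha> \<Rightarrow> \<alpha>\<close> with top \<open>g\<close> and bottom \<open>id\<close> exists, is unique, and its left side lies over
  \<open>M\<^sub>l \<alpha> \<circ> M\<^sub>0 g = h\<close>. Beck--Chevalley, applied to this cell and to the identity cell
  of \<open>f\<^sup>h\<^sub>! \<alpha>\<close> with \<open>f' = id\<close> (legitimate because \<open>f g = id\<close>), gives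
  \<open>f\<^sup>h\<^sub>! \<alpha> = id\<^sup>h\<^sub>! (g\<^sup>*\<alpha>)\<close>, and the unit law (U) removes the \<open>id\<close>.\<close>

lemma is_pullback_along_bijection:
  assumes "bij_betw k I L" and "g \<in> L \<rightarrow>\<^sub>E K"
  shows "is_pullback I K L K (compose I g k) g k (restrict id K)"
proof -
  have k_into: "k i \<in> L" if "i \<in> I" for i
    using assms(1) that by (auto dest: bij_betw_apply)
  have "inj_on (\<lambda>i. (compose I g k i, k i)) I"
    using assms(1) by (auto simp: bij_betw_def inj_on_def)
  moreover have "(\<lambda>i. (compose I g k i, k i)) ` I = {(j, x). j \<in> K \<and> x \<in> L \<and> restrict id K j = g x}"
  proof -
    have "(\<lambda>i. (g (k i), k i)) ` I = (\<lambda>x. (g x, x)) ` (k ` I)"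
      by (simp add: image_image)
    also have "\<dots> = (\<lambda>x. (g x, x)) ` L"
      using assms(1) by (simp add: bij_betw_def)
    also have "\<dots> = {(j, x). j \<in> K \<and> x \<in> L \<and> restrict id K j = g x}"
      using assms(2) by auto
    finally show ?thesis
      by (simp add: compose_def cong: image_cong)
  qed
  ultimately show ?thesis
    using assms(2) k_into by (auto simp: is_pullback_def bij_betw_def compose_def)
qed

lemma is_pullback_identity_bottom_left_eq:
  assumes "is_pullback I K L K f g k (restrict id K)" and "f \<in> I \<rightarrow>\<^sub>E K"
  shows "f = compose I g k"
proof (rule extensionalityI)
  show "f \<in> extensional I"
    using assms(2) by (simp add: PiE_def)
  show "compose I g k \<in> extensional I"
    by simp
  fix i
  assume i: "i \<in> I"
  then have "g (k i) = restrict id K (f i)"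
    using assms(1) by (simp add: is_pullback_def)
  moreover have "f i \<in> K"
    using assms(2) i by auto
  ultimately show "f i = compose I g k i"
    using i by (simp add: compose_eq)
qed

locale multicat =
  fixes A :: "('o, 't, 'l, 'c, 'z) dbl_scheme"
    and Mob :: "'o \<Rightarrow> 'e set" and Mt :: "'t \<Rightarrow> 'e \<Rightarrow> 'e" and Ml :: "'l \<Rightarrow> 'e \<Rightarrow> 'e"
  assumes symmetric_multicategory: "symmetric_multicategory A Mob Mt Ml"
begin

lemma double_category: "double_category A"
  using symmetric_multicategory by (simp add: symmetric_multicategory_def)

lemma functor_to_Pb: "double_functor_to_Pb A Mob Mt Ml"
  using symmetric_multicategory by (simp add: symmetric_multicategory_def)

lemma tight_category: "category (tdom A) (tcod A) (tcomp A) (tid A)"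
  using double_category unfolding double_category_def by blast

lemma cell_category: "category (cleft A) (cright A) (ccomp A) (cid A)"
  using double_category unfolding double_category_def by blast

lemma ctop_functor:
  "is_functor (cleft A) (cright A) (ccomp A) (cid A) (tdom A) (tcod A) (tcomp A) (tid A) (lsrc A) (ctop A)"
  using double_category unfolding double_category_def by blast

lemma cbot_functor:
  "is_functor (cleft A) (cright A) (ccomp A) (cid A) (tdom A) (tcod A) (tcomp A) (tid A) (ltgt A) (cbot A)"
  using double_category unfolding double_category_def by blast

lemma tid_boundary [simp]: "tdom A (tid A X) = X" "tcod A (tid A X) = X"
  using tight_category by (simp_all add: category_def)

lemma tcomp_boundary [simp]:
  assumes "tcod A f = tdom A g"
  shows "tdom A (tcomp A g f) = tdom A f" "tcod A (tcomp A g f) = tcod A g"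
  using tight_category assms by (simp_all add: category_def)

lemma tcomp_tid_tid [simp]: "tcomp A (tid A X) (tid A X) = tid A X"
  using tight_category unfolding category_def by (metis tid_boundary(2))

lemma cell_boundary [simp]:
  "tdom A (ctop A c) = lsrc A (cleft A c)" "tcod A (ctop A c) = lsrc A (cright A c)"
  "tdom A (cbot A c) = ltgt A (cleft A c)" "tcod A (cbot A c) = ltgt A (cright A c)"
  using ctop_functor cbot_functor by (simp_all add: is_functor_def)

lemma cid_boundary [simp]:
  "cleft A (cid A \<beta>) = \<beta>" "cright A (cid A \<beta>) = \<beta>"
  "ctop A (cid A \<beta>) = tid A (lsrc A \<beta>)" "cbot A (cid A \<beta>) = tid A (ltgt A \<beta>)"
  using cell_category ctop_functor cbot_functor by (simp_all add: category_def is_functor_def)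

lemma finite_Mob: "finite (Mob X)"
  using functor_to_Pb by (simp add: double_functor_to_Pb_def)

lemma Mt_PiE: "Mt f \<in> Mob (tdom A f) \<rightarrow>\<^sub>E Mob (tcod A f)"
  using functor_to_Pb by (simp add: double_functor_to_Pb_def)

lemma Mt_tcomp: "tcod A f = tdom A g \<Longrightarrow> Mt (tcomp A g f) = compose (Mob (tdom A f)) (Mt g) (Mt f)"
  using functor_to_Pb by (simp add: double_functor_to_Pb_def)

lemma Mt_tid: "Mt (tid A X) = restrict id (Mob X)"
  using functor_to_Pb by (simp add: double_functor_to_Pb_def)

lemma Ml_PiE: "Ml \<alpha> \<in> Mob (lsrc A \<alpha>) \<rightarrow>\<^sub>E Mob (ltgt A \<alpha>)"
  using functor_to_Pb by (simp add: double_functor_to_Pb_def)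

lemma cell_is_pullback:
  "is_pullback (Mob (lsrc A (cleft A c))) (Mob (ltgt A (cleft A c)))
     (Mob (lsrc A (cright A c))) (Mob (ltgt A (cright A c)))
     (Ml (cleft A c)) (Ml (cright A c)) (Mt (ctop A c)) (Mt (cbot A c))"
  using functor_to_Pb by (simp add: double_functor_to_Pb_def)

lemma Mt_left_inverse:
  assumes "tcod A f = tdom A g" and "tcomp A g f = tid A (tdom A f)" and "x \<in> Mob (tdom A f)"
  shows "Mt g (Mt f x) = x"
proof -
  have "Mt (tcomp A g f) x = x"
    using assms(2,3) by (simp add: Mt_tid)
  then show ?thesis
    using assms(1,3) by (simp add: Mt_tcomp compose_def)
qed

lemma tight_eqI:
  assumes "tcod A f = tcod A f'" and "Mob (tdom A f) = Mob (tdom A f')" and "Mt f = Mt f'"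
  shows "f = f'"
proof -
  have "M0_discrete_fibration A Mob Mt"
    using symmetric_multicategory by (simp add: symmetric_multicategory_def)
  moreover have "Mt f \<in> Mob (tdom A f) \<rightarrow>\<^sub>E Mob (tcod A f)"
    by (rule Mt_PiE)
  ultimately have "\<exists>!f''. tcod A f'' = tcod A f \<and> Mob (tdom A f'') = Mob (tdom A f) \<and> Mt f'' = Mt f"
    using finite_Mob by (simp add: M0_discrete_fibration_def)
  then show ?thesis
    using assms by auto
qed

lemma cell_lift_ex1:
  assumes "f \<in> I \<rightarrow>\<^sub>E J" and "k \<in> I \<rightarrow>\<^sub>E Mob (lsrc A \<beta>)" and "l \<in> J \<rightarrow>\<^sub>E Mob (ltgt A \<beta>)"
    and "finite I" and "finite J"
    and "is_pullback I J (Mob (lsrc A \<beta>)) (Mob (ltgt A \<beta>)) f (Ml \<beta>) k l"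
  shows "\<exists>!c. cright A c = \<beta> \<and> Mob (lsrc A (cleft A c)) = I \<and> Mob (ltgt A (cleft A c)) = J \<and>
    Ml (cleft A c) = f \<and> Mt (ctop A c) = k \<and> Mt (cbot A c) = l"
proof -
  have "M1_discrete_fibration A Mob Mt Ml"
    using symmetric_multicategory by (simp add: symmetric_multicategory_def)
  then show ?thesis
    by (rule M1_discrete_fibration_def[THEN iffD1, rule_format]) (use assms in simp_all)
qed

lemma left_of_cell_over_identity:
  assumes "cbot A c = tid A (ltgt A (cright A c))"
  shows "Ml (cleft A c) = compose (Mob (lsrc A (cleft A c))) (Ml (cright A c)) (Mt (ctop A c))"
proof (rule is_pullback_identity_bottom_left_eq)
  have tgt: "ltgt A (cleft A c) = ltgt A (cright A c)"
    using cell_boundary(3)[of c] assms by simp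
  then show "Ml (cleft A c) \<in> Mob (lsrc A (cleft A c)) \<rightarrow>\<^sub>E Mob (ltgt A (cright A c))"
    using Ml_PiE[of "cleft A c"] by simp
  show "is_pullback (Mob (lsrc A (cleft A c))) (Mob (ltgt A (cright A c)))
      (Mob (lsrc A (cright A c))) (Mob (ltgt A (cright A c)))
      (Ml (cleft A c)) (Ml (cright A c)) (Mt (ctop A c)) (restrict id (Mob (ltgt A (cright A c))))"
    using cell_is_pullback[of c] tgt assms by (simp add: Mt_tid)
qed

lemma cell_over_identity_ex1:
  assumes g_cod: "tcod A g = lsrc A \<alpha>"
    and g_bij: "bij_betw (Mt g) (Mob (tdom A g)) (Mob (tcod A g))"
  shows "\<exists>!c. cright A c = \<alpha> \<and> ctop A c = g \<and> cbot A c = tid A (ltgt A \<alpha>)"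
proof -
  let ?Y = "tdom A g" and ?Z = "ltgt A \<alpha>"
  let ?h = "compose (Mob ?Y) (Ml \<alpha>) (Mt g)"
  let ?lies_over = "\<lambda>c. cright A c = \<alpha> \<and> Mob (lsrc A (cleft A c)) = Mob ?Y \<and>
    Mob (ltgt A (cleft A c)) = Mob ?Z \<and> Ml (cleft A c) = ?h \<and> Mt (ctop A c) = Mt g \<and>
    Mt (cbot A c) = Mt (tid A ?Z)"
  have "\<exists>!c. ?lies_over c"
  proof (rule cell_lift_ex1)
    show "?h \<in> Mob ?Y \<rightarrow>\<^sub>E Mob ?Z"
      using Mt_PiE[of g] Ml_PiE[of \<alpha>] g_cod by (auto simp: compose_def)
    show "Mt g \<in> Mob ?Y \<rightarrow>\<^sub>E Mob (lsrc A \<alpha>)"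
      using Mt_PiE[of g] g_cod by simp
    show "Mt (tid A ?Z) \<in> Mob ?Z \<rightarrow>\<^sub>E Mob ?Z"
      by (simp add: Mt_tid)
    show "is_pullback (Mob ?Y) (Mob ?Z) (Mob (lsrc A \<alpha>)) (Mob ?Z) ?h (Ml \<alpha>) (Mt g) (Mt (tid A ?Z))"
      using is_pullback_along_bijection[OF _ Ml_PiE] g_bij g_cod by (simp add: Mt_tid)
  qed (simp_all add: finite_Mob)
  then obtain c0 where c0: "?lies_over c0" and c0_unique: "\<And>c. ?lies_over c \<Longrightarrow> c = c0"
    by blast
  \<comment> \<open>The lift fixes top and bottom only up to their images under \<open>M\<^sub>0\<close>, which is a discrete fibration.\<close>
  have c0_top: "ctop A c0 = g"
    using c0 g_cod by (intro tight_eqI) simp_all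
  have c0_bot: "cbot A c0 = tid A ?Z"
    using c0 by (intro tight_eqI) simp_all
  show ?thesis
  proof (rule ex1I[of _ c0])
    show "cright A c0 = \<alpha> \<and> ctop A c0 = g \<and> cbot A c0 = tid A ?Z"
      using c0 c0_top c0_bot by simp
  next
    fix c
    assume c: "cright A c = \<alpha> \<and> ctop A c = g \<and> cbot A c = tid A ?Z"
    have src: "lsrc A (cleft A c) = ?Y"
      using cell_boundary(1)[of c] c by simp
    have tgt: "ltgt A (cleft A c) = ?Z"
      using cell_boundary(3)[of c] c by simp
    have "Ml (cleft A c) = ?h"
      using left_of_cell_over_identity[of c] c src by simp
    then have "?lies_over c"
      using c src tgt by simp
    then show "c = c0"
      by (rule c0_unique)
  qed
qed

lemma reindex_ok_inv_into:
  assumes "lsrc A \<alpha> = tdom A f" and "bij_betw (Mt f) (Mob (tdom A f)) (Mob (tcod A f))"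
  shows "reindex_ok A Mob Mt Ml f (compose (Mob (tcod A f)) (Ml \<alpha>) (inv_into (Mob (tdom A f)) (Mt f))) \<alpha>"
proof -
  let ?X = "Mob (tdom A f)" and ?Y = "Mob (tcod A f)"
  have inv_into: "inv_into ?X (Mt f) y \<in> ?X" if "y \<in> ?Y" for y
    using assms(2) that by (metis bij_betw_def inv_into_into)
  have inj: "inj_on (Mt f) ?X"
    using assms(2) by (simp add: bij_betw_def)
  have "compose ?X (compose ?Y (Ml \<alpha>) (inv_into ?X (Mt f))) (Mt f) = Ml \<alpha>"
  proof (rule extensionalityI)
    show "Ml \<alpha> \<in> extensional ?X"
      using Ml_PiE[of \<alpha>] assms(1) by (simp add: PiE_def)
    fix x
    assume x: "x \<in> ?X"
    moreover have "Mt f x \<in> ?Y"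
      using Mt_PiE[of f] x by auto
    ultimately show "compose ?X (compose ?Y (Ml \<alpha>) (inv_into ?X (Mt f))) (Mt f) x = Ml \<alpha> x"
      using inj by (simp add: compose_eq)
  qed simp
  then show ?thesis
    using assms(1) inv_into Ml_PiE[of \<alpha>] by (auto simp: reindex_ok_def compose_def)
qed

end

locale cart_multicat =
  fixes A :: "('o, 't, 'l, 'c, 'z) dbl_scheme"
    and Mob :: "'o \<Rightarrow> 'e set" and Mt :: "'t \<Rightarrow> 'e \<Rightarrow> 'e" and Ml :: "'l \<Rightarrow> 'e \<Rightarrow> 'e"
    and push :: "'t \<Rightarrow> ('e \<Rightarrow> 'e) \<Rightarrow> 'l \<Rightarrow> 'l"
  assumes cartesian_multicategory: "cartesian_multicategory A Mob Mt Ml push"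

sublocale cart_multicat \<subseteq> multicat
  using cartesian_multicategory unfolding cartesian_multicategory_def by unfold_locales (rule conjunct1)

context cart_multicat
begin

lemma push_boundary:
  assumes "reindex_ok A Mob Mt Ml f h \<alpha>"
  shows "lsrc A (push f h \<alpha>) = tcod A f" "ltgt A (push f h \<alpha>) = ltgt A \<alpha>" "Ml (push f h \<alpha>) = h"
  using cartesian_multicategory assms by (simp_all add: cartesian_multicategory_def)

lemma push_tid: "push (tid A (lsrc A \<alpha>)) (Ml \<alpha>) \<alpha> = \<alpha>"
  using cartesian_multicategory by (simp add: cartesian_multicategory_def)

lemma push_beck_chevalley:
  assumes "reindex_ok A Mob Mt Ml f h \<alpha>"
    and "cright A c1 = \<alpha>" and "cright A c2 = push f h \<alpha>" and "cbot A c1 = cbot A c2"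
    and "tdom A f' = lsrc A (cleft A c1)" and "tcod A f' = lsrc A (cleft A c2)"
    and "tcomp A (ctop A c2) f' = tcomp A f (ctop A c1)"
    and "compose (Mob (tdom A f')) (Ml (cleft A c2)) (Mt f') = Ml (cleft A c1)"
  shows "cleft A c2 = push f' (Ml (cleft A c2)) (cleft A c1)"
  using cartesian_multicategory assms unfolding cartesian_multicategory_def by blast

lemma push_eq_left_of_section_cell:
  assumes ok: "reindex_ok A Mob Mt Ml f h (cright A c)"
    and bot: "cbot A c = tid A (ltgt A (cright A c))"
    and f_section: "tcomp A f (ctop A c) = tid A (tcod A f)"
  shows "cleft A c = push f h (cright A c)"
proof -
  let ?\<alpha> = "cright A c" and ?Y = "tcod A f" and ?g = "ctop A c"
  let ?\<delta> = "push f h ?\<alpha>"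
  have g_cod: "tcod A ?g = tdom A f"
    using ok by (simp add: reindex_ok_def)
  have g_dom: "tdom A ?g = ?Y"
    using tcomp_boundary(1)[OF g_cod] f_section by simp
  have h_PiE: "h \<in> Mob ?Y \<rightarrow>\<^sub>E Mob (ltgt A ?\<alpha>)"
    using ok by (simp add: reindex_ok_def)
  have left_map: "Ml (cleft A c) = h"
  proof (rule extensionalityI)
    show "Ml (cleft A c) \<in> extensional (Mob ?Y)"
      using Ml_PiE[of "cleft A c"] g_dom by (simp add: PiE_def)
    show "h \<in> extensional (Mob ?Y)"
      using h_PiE by (simp add: PiE_def)
    fix y
    assume y: "y \<in> Mob ?Y"
    have gy: "Mt ?g y \<in> Mob (tdom A f)"
      using Mt_PiE[of ?g] g_cod g_dom y by auto
    have "Ml (cleft A c) y = Ml ?\<alpha> (Mt ?g y)"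
      using left_of_cell_over_identity[OF bot] y g_dom by (simp add: compose_eq)
    also have "\<dots> = compose (Mob (tdom A f)) h (Mt f) (Mt ?g y)"
      using ok by (simp add: reindex_ok_def)
    also have "\<dots> = h y"
      using gy Mt_left_inverse[of ?g f y] g_cod g_dom f_section y by (simp add: compose_eq)
    finally show "Ml (cleft A c) y = h y" .
  qed
  have "cleft A (cid A ?\<delta>) = push (tid A ?Y) (Ml (cleft A (cid A ?\<delta>))) (cleft A c)"
  proof (rule push_beck_chevalley[OF ok])
    show "compose (Mob (tdom A (tid A ?Y))) (Ml (cleft A (cid A ?\<delta>))) (Mt (tid A ?Y)) = Ml (cleft A c)"
      using h_PiE push_boundary[OF ok] left_map unfolding Mt_tid id_def
      by (simp add: PiE_def compose_Id[of h "Mob ?Y" "Mob (ltgt A ?\<alpha>)"])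
  qed (use push_boundary[OF ok] bot g_dom f_section in simp_all)
  also have "\<dots> = push (tid A (lsrc A (cleft A c))) (Ml (cleft A c)) (cleft A c)"
    using push_boundary[OF ok] left_map g_dom by simp
  finally show ?thesis
    using push_tid by simp
qed

end

theorem proposition4p20:
  fixes A :: "('o, 't, 'l, 'c, 'z) dbl_scheme"
    and Mob :: "'o \<Rightarrow> 'e set" and Mt :: "'t \<Rightarrow> 'e \<Rightarrow> 'e" and Ml :: "'l \<Rightarrow> 'e \<Rightarrow> 'e"
    and push :: "'t \<Rightarrow> ('e \<Rightarrow> 'e) \<Rightarrow> 'l \<Rightarrow> 'l"
    and \<alpha> :: 'l and f g :: 't
  assumes cart: "cartesian_multicategory A Mob Mt Ml push"
    and alpha_src: "lsrc A \<alpha> = tdom A f"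
    and bij: "bij_betw (Mt f) (Mob (tdom A f)) (Mob (tcod A f))"
    and g_dom: "tdom A g = tcod A f" and g_cod: "tcod A g = tdom A f"
    and gf: "tcomp A g f = tid A (tdom A f)" and fg: "tcomp A f g = tid A (tcod A f)"
  shows "(\<exists>!c. cright A c = \<alpha> \<and> ctop A c = g \<and> cbot A c = tid A (ltgt A \<alpha>)) \<and>
         (\<forall>c. cright A c = \<alpha> \<and> ctop A c = g \<and> cbot A c = tid A (ltgt A \<alpha>) \<longrightarrow>
              cleft A c = push f (compose (Mob (tcod A f)) (Ml \<alpha>) (inv_into (Mob (tdom A f)) (Mt f))) \<alpha>)"
proof -
  interpret cart_multicat A Mob Mt Ml push
    by unfold_locales (rule cart)
  have "bij_betw (Mt g) (Mob (tdom A g)) (Mob (tcod A g))"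
  proof (rule bij_betw_byWitness[where f' = "Mt f"])
    show "\<forall>y \<in> Mob (tdom A g). Mt f (Mt g y) = y"
      using Mt_left_inverse[of g f] g_dom g_cod fg by simp
    show "\<forall>x \<in> Mob (tcod A g). Mt g (Mt f x) = x"
      using Mt_left_inverse[of f g] g_dom g_cod gf by simp
  qed (use Mt_PiE[of g] Mt_PiE[of f] g_dom g_cod in auto)
  then have "\<exists>!c. cright A c = \<alpha> \<and> ctop A c = g \<and> cbot A c = tid A (ltgt A \<alpha>)"
    using cell_over_identity_ex1 alpha_src g_cod by simp
  moreover have "cleft A c = push f (compose (Mob (tcod A f)) (Ml \<alpha>) (inv_into (Mob (tdom A f)) (Mt f))) \<alpha>"
    if "cright A c = \<alpha>" "ctop A c = g" "cbot A c = tid A (ltgt A \<alpha>)" for c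
    using push_eq_left_of_section_cell[of f _ c] reindex_ok_inv_into[OF alpha_src bij] that fg by simp
  ultimately show ?thesis
    by blast
qed

end
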